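(* Let $R$ be a semi-graded ring, $J$ a semi-graded ideal of $R$ and $f:R\to R/J$ the canonical map. Then the functor $f^*:\mathsf{SGR}\text{-}R\to\mathsf{SGR}\text{-}R/J$ is left adjoint to $f_*:\mathsf{SGR}\text{-}R/J\to\mathsf{SGR}\text{-}R$; i.e. there are bijections $\mathrm{Hom}_{\mathsf{SGR}\text{-}R}(M,f_*(N))\cong\mathrm{Hom}_{\mathsf{SGR}\text{-}R/J}(f^*(M),N)$ natural in $M\in\mathsf{SGR}\text{-}R$ and $N\in\mathsf{SGR}\text{-}R/J$.
   Context: Rings are associative with $1$; modules are left modules. A ring $R$ is semi-graded (SG) if there are additive subgroups $R_n$ ($n\in\mathbb{Z}$) with $R=\bigoplus_n R_n$, $R_mR_n\subseteq\bigoplus_{k\le m+n}R_k$, and $1\in R_0$. An $R$-module $M$ is SG if $M=\bigoplus_nM_n$ (additive subgroups) with $R_mM_n\subseteq\bigoplus_{k\le m+n}M_k$ for $m\ge0$, $n\in\mathbb{Z}$; a homomorphism of SG modules is homogeneous if it maps $M_n$ into $N_n$. A submodule $N'$ is an SG submodule if $N'=\bigoplus_n(N'\cap M_n)$; then $M/N'$ is SG with $(M/N')_n=(M_n+N')/N'$. For $X\subseteq M$, $\langle X\rangle^{\mathsf{SG}}$ is the intersection of all SG submodules containing $X$. $\mathsf{SGR}\text{-}R$ is the category of SG $R$-modules and homogeneous $R$-homomorphisms. An SG ideal $J$ is a two-sided ideal that is an SG submodule of $R$; $R/J$ is SG with $(R/J)_n=(R_n+J)/J$. $f_*$ is restriction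 of scalars along $f$ (same semi-graduation, morphisms unchanged). $f^*(M)=M/\langle JM\rangle^{\mathsf{SG}}$, an SG $R/J$-module via $\overline a\cdot\overline m=\overline{am}$, and $f^*(\alpha)(\overline m)=\overline{\alpha(m)}$ for a morphism $\alpha$. *)

theory Defs
  imports "HOL-Algebra.QuotRing" "HOL-Algebra.Module" "HOL-Library.FuncSet"
begin

text \<open>Left modules over a (not necessarily commutative) ring, using the
  HOL-Algebra module record and the module axioms (without commutativity).\<close>

definition lmodule :: "('r, 'c) ring_scheme \<Rightarrow> ('r, 'm, 'd) module_scheme \<Rightarrow> bool" where
  "lmodule R M \<equiv> ring R \<and> abelian_group M \<and> module_axioms R M"

definition lmod_hom :: "('r, 'c) ring_scheme \<Rightarrow> ('r, 'm, 'd) module_scheme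
    \<Rightarrow> ('r, 'n, 'e) module_scheme \<Rightarrow> ('m \<Rightarrow> 'n) set" where
  "lmod_hom R M N = {f. f \<in> carrier M \<rightarrow> carrier N
     \<and> (\<forall>x\<in>carrier M. \<forall>y\<in>carrier M. f (x \<oplus>\<^bsub>M\<^esub> y) = f x \<oplus>\<^bsub>N\<^esub> f y)
     \<and> (\<forall>a\<in>carrier R. \<forall>x\<in>carrier M. f (smult M a x) = smult N a (f x))}"

definition lsubmodule :: "('r, 'c) ring_scheme \<Rightarrow> ('r, 'm, 'd) module_scheme \<Rightarrow> 'm set \<Rightarrow> bool" where
  "lsubmodule R M N' \<equiv> N' \<subseteq> carrier M \<and> subgroup N' (add_monoid M)
     \<and> (\<forall>a\<in>carrier R. \<forall>x\<in>N'. smult M a x \<in> N')"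

definition int_sum :: "('m, 'c) ring_scheme \<Rightarrow> (int \<Rightarrow> 'm set) \<Rightarrow> 'm set" where
  "int_sum M S = {x. \<exists>c. (\<forall>n. c n \<in> S n) \<and> finite {n. c n \<noteq> \<zero>\<^bsub>M\<^esub>}
      \<and> x = finsum M c {n. c n \<noteq> \<zero>\<^bsub>M\<^esub>}}"

definition int_sum_le :: "('m, 'c) ring_scheme \<Rightarrow> (int \<Rightarrow> 'm set) \<Rightarrow> int \<Rightarrow> 'm set" where
  "int_sum_le M S N = int_sum M (\<lambda>k. if k \<le> N then S k else {\<zero>\<^bsub>M\<^esub>})"

definition is_dsum :: "('m, 'c) ring_scheme \<Rightarrow> (int \<Rightarrow> 'm set) \<Rightarrow> bool" where
  "is_dsum M S \<equiv> (\<forall>n. subgroup (S n) (add_monoid M)) \<and> carrier M = int_sum M S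
     \<and> (\<forall>c d. (\<forall>n. c n \<in> S n) \<and> (\<forall>n. d n \<in> S n)
          \<and> finite {n. c n \<noteq> \<zero>\<^bsub>M\<^esub>} \<and> finite {n. d n \<noteq> \<zero>\<^bsub>M\<^esub>}
          \<and> finsum M c {n. c n \<noteq> \<zero>\<^bsub>M\<^esub>} = finsum M d {n. d n \<noteq> \<zero>\<^bsub>M\<^esub>}
          \<longrightarrow> c = d)"

definition sg_ring :: "('r, 'c) ring_scheme \<Rightarrow> (int \<Rightarrow> 'r set) \<Rightarrow> bool" where
  "sg_ring R Rg \<equiv> ring R \<and> is_dsum R Rg
     \<and> (\<forall>m n. \<forall>a\<in>Rg m. \<forall>b\<in>Rg n. a \<otimes>\<^bsub>R\<^esub> b \<in> int_sum_le R Rg (m + n))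
     \<and> \<one>\<^bsub>R\<^esub> \<in> Rg 0"

definition sg_module :: "('r, 'c) ring_scheme \<Rightarrow> (int \<Rightarrow> 'r set)
    \<Rightarrow> ('r, 'm, 'd) module_scheme \<Rightarrow> (int \<Rightarrow> 'm set) \<Rightarrow> bool" where
  "sg_module R Rg M Mg \<equiv> lmodule R M \<and> is_dsum M Mg
     \<and> (\<forall>m n. m \<ge> 0 \<longrightarrow> (\<forall>a\<in>Rg m. \<forall>x\<in>Mg n. smult M a x \<in> int_sum_le M Mg (m + n)))"

definition sg_submodule :: "('r, 'c) ring_scheme \<Rightarrow> ('r, 'm, 'd) module_scheme
    \<Rightarrow> (int \<Rightarrow> 'm set) \<Rightarrow> 'm set \<Rightarrow> bool" where
  "sg_submodule R M Mg N' \<equiv> lsubmodule R M N' \<and> N' = int_sum M (\<lambda>n. N' \<inter> Mg n)"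

definition sg_gen :: "('r, 'c) ring_scheme \<Rightarrow> ('r, 'm, 'd) module_scheme
    \<Rightarrow> (int \<Rightarrow> 'm set) \<Rightarrow> 'm set \<Rightarrow> 'm set" where
  "sg_gen R M Mg X = \<Inter>{N'. sg_submodule R M Mg N' \<and> X \<subseteq> N'}"

definition sg_ideal :: "('r, 'c) ring_scheme \<Rightarrow> (int \<Rightarrow> 'r set) \<Rightarrow> 'r set \<Rightarrow> bool" where
  "sg_ideal R Rg J \<equiv> ideal J R \<and> J = int_sum R (\<lambda>n. J \<inter> Rg n)"

text \<open>Homogeneous homomorphisms (taken extensional, so that Hom-sets are sets
  of genuine maps on the carrier).\<close>
definition sg_hom :: "('r, 'c) ring_scheme \<Rightarrow> ('r, 'm, 'd) module_scheme \<Rightarrow> (int \<Rightarrow> 'm set)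
    \<Rightarrow> ('r, 'n, 'e) module_scheme \<Rightarrow> (int \<Rightarrow> 'n set) \<Rightarrow> ('m \<Rightarrow> 'n) set" where
  "sg_hom R M Mg N Ng = {f. f \<in> lmod_hom R M N \<and> (\<forall>n. f ` Mg n \<subseteq> Ng n)
      \<and> f \<in> extensional (carrier M)}"

definition quot_grading :: "('r, 'c) ring_scheme \<Rightarrow> 'r set \<Rightarrow> (int \<Rightarrow> 'r set) \<Rightarrow> int \<Rightarrow> 'r set set" where
  "quot_grading R J Rg n = (\<lambda>r. J +>\<^bsub>R\<^esub> r) ` Rg n"

definition push :: "('r, 'c) ring_scheme \<Rightarrow> 'r set \<Rightarrow> ('r set, 'n) module \<Rightarrow> ('r, 'n) module" where
  "push R J N = \<lparr>carrier = carrier N, mult = mult N, one = one N, zero = zero N, add = add N,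
      smult = (\<lambda>r x. smult N (J +>\<^bsub>R\<^esub> r) x)\<rparr>"

definition ideal_times :: "'r set \<Rightarrow> ('r, 'm, 'd) module_scheme \<Rightarrow> 'm set" where
  "ideal_times J M = {smult M a x | a x. a \<in> J \<and> x \<in> carrier M}"

definition pull_sub :: "('r, 'c) ring_scheme \<Rightarrow> 'r set \<Rightarrow> ('r, 'm) module \<Rightarrow> (int \<Rightarrow> 'm set) \<Rightarrow> 'm set" where
  "pull_sub R J M Mg = sg_gen R M Mg (ideal_times J M)"

text \<open>f^*(M) = M / <JM>^SG as an R/J-module, with (a+J).(m+L) = am+L.\<close>
definition pull :: "('r, 'c) ring_scheme \<Rightarrow> 'r set \<Rightarrow> ('r, 'm) module \<Rightarrow> (int \<Rightarrow> 'm set)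
    \<Rightarrow> ('r set, 'm set) module" where
  "pull R J M Mg = (let L = pull_sub R J M Mg in
     \<lparr>carrier = a_rcosets\<^bsub>M\<^esub> L, mult = (\<lambda>X Y. X <+>\<^bsub>M\<^esub> Y), one = L, zero = L,
      add = (\<lambda>X Y. X <+>\<^bsub>M\<^esub> Y),
      smult = (\<lambda>A X. \<Union>a\<in>A. \<Union>x\<in>X. L +>\<^bsub>M\<^esub> smult M a x)\<rparr>)"

definition pull_grading :: "('r, 'c) ring_scheme \<Rightarrow> 'r set \<Rightarrow> ('r, 'm) module \<Rightarrow> (int \<Rightarrow> 'm set)
    \<Rightarrow> int \<Rightarrow> 'm set set" where
  "pull_grading R J M Mg n = (\<lambda>x. pull_sub R J M Mg +>\<^bsub>M\<^esub> x) ` Mg n"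

text \<open>f^*(beta)(m+L) = beta(m)+L'.\<close>
definition pull_map :: "('r, 'c) ring_scheme \<Rightarrow> 'r set \<Rightarrow> ('r, 'm) module \<Rightarrow> (int \<Rightarrow> 'm set)
    \<Rightarrow> ('r, 'k) module \<Rightarrow> (int \<Rightarrow> 'k set) \<Rightarrow> ('m \<Rightarrow> 'k) \<Rightarrow> 'm set \<Rightarrow> 'k set" where
  "pull_map R J M Mg M' Mg' \<beta> =
     (\<lambda>X\<in>carrier (pull R J M Mg). the_elem ((\<lambda>x. pull_sub R J M' Mg' +>\<^bsub>M'\<^esub> \<beta> x) ` X))"

text \<open>The canonical map Hom(M, f_*N) to Hom(f^*M, N), alpha maps to (m+L maps to alpha(m)).\<close>
definition adj_map :: "('r, 'c) ring_scheme \<Rightarrow> 'r set \<Rightarrow> ('r, 'm) module \<Rightarrow> (int \<Rightarrow> 'm set)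
    \<Rightarrow> ('m \<Rightarrow> 'n) \<Rightarrow> 'm set \<Rightarrow> 'n" where
  "adj_map R J M Mg \<alpha> = (\<lambda>X\<in>carrier (pull R J M Mg). the_elem (\<alpha> ` X))"

end

(* Write L for the SG submodule generated by JM, so that f^*(M) = M/L. Everything rests on one
   observation: the preimage of an SG submodule under a homogeneous R-linear map is an SG submodule.
   Applied to the zero submodule of f_*(N), it shows that a homogeneous R-linear map M -> f_*(N),
   which kills JM because J acts on N as zero, kills L and so factors through M/L; the factorisation
   is R/J-linear and homogeneous, and precomposition with M -> M/L inverts this construction.
   Applied to L', it shows that homogeneous maps M -> M' carry L into L', so f^* acts on morphisms.
   Finally M/L is again semi-graded because L is: when the kernel of a surjection is a graded
   subgroup, the image of a direct sum decomposition is again direct. *)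
theory Submission
  imports Defs
begin

section \<open>Internal direct sums\<close>

lemma (in abelian_monoid) finsum_support_eq:
  assumes "finite F" "{n. c n \<noteq> \<zero>} \<subseteq> F" "\<And>n. c n \<in> carrier G"
  shows "finsum G c {n. c n \<noteq> \<zero>} = finsum G c F"
  by (rule add.finprod_mono_neutral_cong_left) (use assms in auto)

lemma (in abelian_monoid) int_sum_subset_carrier:
  assumes "\<And>n. S n \<subseteq> carrier G"
  shows "int_sum G S \<subseteq> carrier G"
  using assms unfolding int_sum_def by (auto intro!: finsum_closed)

lemma (in abelian_group_hom) hom_finsum:
  assumes "finite F" "c \<in> F \<rightarrow> carrier G"
  shows "h (finsum G c F) = finsum H (h \<circ> c) F"
  using assms
proof (induction F rule: finite_induct)
  case (insert x F)
  then have "(\<lambda>a. h (c a)) \<in> F \<rightarrow> carrier H" "h (c x) \<in> carrier H" by (auto simp: Pi_iff)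
  with insert show ?case by (simp add: comp_def)
qed simp

lemma (in abelian_group_hom) hom_finsum_support:
  assumes "finite {n. c n \<noteq> \<zero>\<^bsub>G\<^esub>}" "\<And>n. c n \<in> carrier G"
  shows "finite {n. h (c n) \<noteq> \<zero>\<^bsub>H\<^esub>}"
    and "h (finsum G c {n. c n \<noteq> \<zero>\<^bsub>G\<^esub>}) = finsum H (\<lambda>n. h (c n)) {n. h (c n) \<noteq> \<zero>\<^bsub>H\<^esub>}"
proof -
  have supp: "{n. h (c n) \<noteq> \<zero>\<^bsub>H\<^esub>} \<subseteq> {n. c n \<noteq> \<zero>\<^bsub>G\<^esub>}" by auto
  with assms(1) show "finite {n. h (c n) \<noteq> \<zero>\<^bsub>H\<^esub>}" by (rule finite_subset[rotated])
  have "h (finsum G c {n. c n \<noteq> \<zero>\<^bsub>G\<^esub>}) = finsum H (\<lambda>n. h (c n)) {n. c n \<noteq> \<zero>\<^bsub>G\<^esub>}"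
    using hom_finsum[OF assms(1)] assms(2) by (simp add: comp_def)
  also have "\<dots> = finsum H (\<lambda>n. h (c n)) {n. h (c n) \<noteq> \<zero>\<^bsub>H\<^esub>}"
    using H.finsum_support_eq[OF assms(1) supp] assms(2) by simp
  finally show "h (finsum G c {n. c n \<noteq> \<zero>\<^bsub>G\<^esub>}) = finsum H (\<lambda>n. h (c n)) {n. h (c n) \<noteq> \<zero>\<^bsub>H\<^esub>}" .
qed

lemma (in abelian_group_hom) hom_int_sum:
  assumes "\<And>n. S n \<subseteq> carrier G" "\<And>n. h ` S n \<subseteq> T n" "x \<in> int_sum G S"
  shows "h x \<in> int_sum H T"
proof -
  obtain c where c: "\<forall>n. c n \<in> S n" "finite {n. c n \<noteq> \<zero>\<^bsub>G\<^esub>}" "x = finsum G c {n. c n \<noteq> \<zero>\<^bsub>G\<^esub>}"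
    using assms(3) unfolding int_sum_def by blast
  have "\<And>n. c n \<in> carrier G" using c(1) assms(1) by blast
  note image = hom_finsum_support[OF c(2) this]
  show ?thesis unfolding int_sum_def
    using image c(1,3) assms(2) by (intro CollectI exI[of _ "\<lambda>n. h (c n)"]) blast
qed

lemma (in abelian_group_hom) hom_int_sum_le:
  assumes "\<And>n. S n \<subseteq> carrier G" "\<And>n. h ` S n \<subseteq> T n" "x \<in> int_sum_le G S k"
  shows "h x \<in> int_sum_le H T k"
  unfolding int_sum_le_def
  by (rule hom_int_sum[OF _ _ assms(3)[unfolded int_sum_le_def]]) (use assms(1,2) in auto)

lemma (in abelian_group) finsum_in_subgroup:
  assumes "subgroup S (add_monoid G)" "finite F" "\<And>n. n \<in> F \<Longrightarrow> c n \<in> S"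
  shows "finsum G c F \<in> S"
  using assms(2,3)
proof (induction F rule: finite_induct)
  case empty
  show ?case using subgroup.one_closed[OF assms(1)] by simp
next
  case (insert x F)
  have "c \<in> F \<rightarrow> carrier G" "c x \<in> carrier G"
    using insert.prems subgroup.subset[OF assms(1)] by auto
  then show ?case
    using insert subgroup.m_closed[OF assms(1)] by simp
qed

definition dsum_comp :: "('m, 'c) ring_scheme \<Rightarrow> (int \<Rightarrow> 'm set) \<Rightarrow> 'm \<Rightarrow> int \<Rightarrow> 'm" where
  "dsum_comp M Mg x = (THE c. (\<forall>n. c n \<in> Mg n) \<and> finite {n. c n \<noteq> \<zero>\<^bsub>M\<^esub>}
      \<and> x = finsum M c {n. c n \<noteq> \<zero>\<^bsub>M\<^esub>})"

locale dsum_group = abelian_group M for M (structure) +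
  fixes Mg :: "int \<Rightarrow> 'a set"
  assumes is_dsum: "is_dsum M Mg"

lemma dsum_groupI: "abelian_group M \<Longrightarrow> is_dsum M Mg \<Longrightarrow> dsum_group M Mg"
  by (intro dsum_group.intro dsum_group_axioms.intro)

context dsum_group
begin

lemma grading_subgroup: "subgroup (Mg n) (add_monoid M)"
  using is_dsum unfolding is_dsum_def by blast

lemma grading_subset: "Mg n \<subseteq> carrier M"
  using subgroup.subset[OF grading_subgroup] by simp

lemma zero_in_grading: "\<zero> \<in> Mg n"
  using subgroup.one_closed[OF grading_subgroup] by simp

lemma carrier_eq_int_sum: "carrier M = int_sum M Mg"
  using is_dsum unfolding is_dsum_def by blast

lemma decomposition_unique:
  assumes "\<forall>n. c n \<in> Mg n" "\<forall>n. d n \<in> Mg n" "finite {n. c n \<noteq> \<zero>}" "finite {n. d n \<noteq> \<zero>}"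
    "finsum M c {n. c n \<noteq> \<zero>} = finsum M d {n. d n \<noteq> \<zero>}"
  shows "c = d"
  using is_dsum assms unfolding is_dsum_def by blast

lemma dsum_comp_eq:
  assumes "\<forall>n. c n \<in> Mg n" "finite {n. c n \<noteq> \<zero>}" "x = finsum M c {n. c n \<noteq> \<zero>}"
  shows "dsum_comp M Mg x = c"
  unfolding dsum_comp_def
  by (rule the_equality) (use assms decomposition_unique in auto)

lemma dsum_decomposition:
  assumes "x \<in> carrier M"
  shows "dsum_comp M Mg x n \<in> Mg n" "finite {n. dsum_comp M Mg x n \<noteq> \<zero>}"
    "x = finsum M (dsum_comp M Mg x) {n. dsum_comp M Mg x n \<noteq> \<zero>}"
proof -
  obtain c where c: "\<forall>n. c n \<in> Mg n" "finite {n. c n \<noteq> \<zero>}" "x = finsum M c {n. c n \<noteq> \<zero>}"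
    using assms carrier_eq_int_sum unfolding int_sum_def by blast
  with dsum_comp_eq[OF c] show "dsum_comp M Mg x n \<in> Mg n" "finite {n. dsum_comp M Mg x n \<noteq> \<zero>}"
    "x = finsum M (dsum_comp M Mg x) {n. dsum_comp M Mg x n \<noteq> \<zero>}" by simp_all
qed

lemma dsum_comp_carrier: "x \<in> carrier M \<Longrightarrow> dsum_comp M Mg x n \<in> carrier M"
  using dsum_decomposition(1) grading_subset by blast

lemma dsum_comp_zero: "dsum_comp M Mg \<zero> = (\<lambda>n. \<zero>)"
  by (rule dsum_comp_eq) (simp_all add: zero_in_grading)

lemma dsum_comp_add:
  assumes "x \<in> carrier M" "y \<in> carrier M"
  shows "dsum_comp M Mg (x \<oplus> y) n = dsum_comp M Mg x n \<oplus> dsum_comp M Mg y n"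
proof -
  let ?c = "dsum_comp M Mg x" and ?d = "dsum_comp M Mg y"
  let ?F = "{n. ?c n \<noteq> \<zero>} \<union> {n. ?d n \<noteq> \<zero>}"
  have F: "finite ?F" using dsum_decomposition(2) assms by blast
  have cd: "\<And>n. ?c n \<in> carrier M" "\<And>n. ?d n \<in> carrier M"
    using dsum_comp_carrier assms by blast+
  have supp: "{n. ?c n \<oplus> ?d n \<noteq> \<zero>} \<subseteq> ?F" using cd by auto
  have "x \<oplus> y = finsum M ?c ?F \<oplus> finsum M ?d ?F"
    using dsum_decomposition(3) finsum_support_eq[OF F] cd assms by (metis Un_upper1 Un_upper2)
  also have "\<dots> = finsum M (\<lambda>n. ?c n \<oplus> ?d n) ?F"
    using cd by (simp add: finsum_addf Pi_iff)
  also have "\<dots> = finsum M (\<lambda>n. ?c n \<oplus> ?d n) {n. ?c n \<oplus> ?d n \<noteq> \<zero>}"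
    using finsum_support_eq[OF F supp] cd by simp
  finally have "dsum_comp M Mg (x \<oplus> y) = (\<lambda>n. ?c n \<oplus> ?d n)"
    using subgroup.m_closed[OF grading_subgroup] dsum_decomposition(1) assms
      finite_subset[OF supp F] by (intro dsum_comp_eq) auto
  then show ?thesis by simp
qed

lemma graded_subgroup_iff:
  assumes "subgroup N (add_monoid M)"
  shows "N = int_sum M (\<lambda>n. N \<inter> Mg n) \<longleftrightarrow> (\<forall>x\<in>N. \<forall>n. dsum_comp M Mg x n \<in> N)"
proof
  assume graded: "N = int_sum M (\<lambda>n. N \<inter> Mg n)"
  show "\<forall>x\<in>N. \<forall>n. dsum_comp M Mg x n \<in> N"
  proof (intro ballI allI)
    fix x n assume "x \<in> N"
    then obtain c where c: "\<forall>n. c n \<in> N \<inter> Mg n" "finite {n. c n \<noteq> \<zero>}"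
      "x = finsum M c {n. c n \<noteq> \<zero>}"
      using graded unfolding int_sum_def by blast
    then have "dsum_comp M Mg x = c" by (intro dsum_comp_eq) blast+
    with c(1) show "dsum_comp M Mg x n \<in> N" by blast
  qed
next
  assume closed: "\<forall>x\<in>N. \<forall>n. dsum_comp M Mg x n \<in> N"
  show "N = int_sum M (\<lambda>n. N \<inter> Mg n)"
  proof
    show "N \<subseteq> int_sum M (\<lambda>n. N \<inter> Mg n)"
    proof
      fix x assume x: "x \<in> N"
      then have "x \<in> carrier M" using subgroup.subset[OF assms] by auto
      note comp = dsum_decomposition[OF this]
      have "\<forall>n. dsum_comp M Mg x n \<in> N \<inter> Mg n" using comp(1) closed x by blast
      with comp(2,3) show "x \<in> int_sum M (\<lambda>n. N \<inter> Mg n)" unfolding int_sum_def by blast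
    qed
    show "int_sum M (\<lambda>n. N \<inter> Mg n) \<subseteq> N"
    proof
      fix x assume "x \<in> int_sum M (\<lambda>n. N \<inter> Mg n)"
      then obtain c where "\<forall>n. c n \<in> N \<inter> Mg n" "finite {n. c n \<noteq> \<zero>}"
        "x = finsum M c {n. c n \<noteq> \<zero>}"
        unfolding int_sum_def by blast
      then show "x \<in> N" using finsum_in_subgroup[OF assms] by blast
    qed
  qed
qed

end

lemma (in abelian_group_hom) carrier_eq_int_sum_image:
  assumes "is_dsum G Gg" "h ` carrier G = carrier H"
  shows "carrier H = int_sum H (\<lambda>n. h ` Gg n)"
proof
  interpret G: dsum_group G Gg by (rule dsum_groupI[OF G.abelian_group_axioms assms(1)])
  have "h ` Gg n \<subseteq> carrier H" for n using G.grading_subset hom_closed by blast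
  then show "int_sum H (\<lambda>n. h ` Gg n) \<subseteq> carrier H" by (rule H.int_sum_subset_carrier)
  show "carrier H \<subseteq> int_sum H (\<lambda>n. h ` Gg n)"
  proof
    fix y assume "y \<in> carrier H"
    then obtain x where x: "x \<in> carrier G" "y = h x" unfolding assms(2)[symmetric] by blast
    have "x \<in> int_sum G Gg" using x(1) unfolding G.carrier_eq_int_sum .
    then have "h x \<in> int_sum H (\<lambda>n. h ` Gg n)" by (rule hom_int_sum[OF G.grading_subset, rotated]) simp
    then show "y \<in> int_sum H (\<lambda>n. h ` Gg n)" using x(2) by simp
  qed
qed

lemma (in abelian_group_hom) grading_image_lift:
  assumes "is_dsum G Gg" "\<forall>n. c n \<in> h ` Gg n" "finite {n. c n \<noteq> \<zero>\<^bsub>H\<^esub>}"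
  obtains c' where "\<forall>n. c' n \<in> Gg n" "finite {n. c' n \<noteq> \<zero>\<^bsub>G\<^esub>}" "\<And>n. h (c' n) = c n"
proof -
  interpret G: dsum_group G Gg by (rule dsum_groupI[OF G.abelian_group_axioms assms(1)])
  define c' where "c' n = (if c n = \<zero>\<^bsub>H\<^esub> then \<zero>\<^bsub>G\<^esub> else (SOME x. x \<in> Gg n \<and> h x = c n))" for n
  have c': "c' n \<in> Gg n \<and> h (c' n) = c n" for n
  proof (cases "c n = \<zero>\<^bsub>H\<^esub>")
    case True
    then show ?thesis by (simp add: c'_def G.zero_in_grading)
  next
    case False
    have "\<exists>x. x \<in> Gg n \<and> h x = c n" using spec[OF assms(2), of n] by (auto simp: image_iff)
    then have "(SOME x. x \<in> Gg n \<and> h x = c n) \<in> Gg n \<and> h (SOME x. x \<in> Gg n \<and> h x = c n) = c n"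
      by (rule someI_ex)
    with False show ?thesis by (simp add: c'_def)
  qed
  have "{n. c' n \<noteq> \<zero>\<^bsub>G\<^esub>} \<subseteq> {n. c n \<noteq> \<zero>\<^bsub>H\<^esub>}" unfolding c'_def by auto
  then have "finite {n. c' n \<noteq> \<zero>\<^bsub>G\<^esub>}" using assms(3) by (rule finite_subset)
  with c' show ?thesis using that by blast
qed

lemma (in abelian_group_hom) dsum_comp_cong:
  assumes "is_dsum G Gg" "a_kernel G H h = int_sum G (\<lambda>n. a_kernel G H h \<inter> Gg n)"
    "x \<in> carrier G" "y \<in> carrier G" "h x = h y"
  shows "h (dsum_comp G Gg x n) = h (dsum_comp G Gg y n)"
proof -
  interpret G: dsum_group G Gg by (rule dsum_groupI[OF G.abelian_group_axioms assms(1)])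
  let ?z = "x \<oplus>\<^bsub>G\<^esub> \<ominus>\<^bsub>G\<^esub> y"
  have z: "?z \<in> carrier G" "?z \<oplus>\<^bsub>G\<^esub> y = x" "h ?z = \<zero>\<^bsub>H\<^esub>"
    using assms(3-5) by (simp_all add: G.a_assoc G.l_neg H.r_neg del: G.r_neg)
  have "subgroup (a_kernel G H h) (add_monoid G)"
    using additive_subgroup.a_subgroup[OF additive_subgroup_a_kernel] .
  then have "\<forall>z\<in>a_kernel G H h. \<forall>n. dsum_comp G Gg z n \<in> a_kernel G H h"
    using assms(2) by (rule iffD1[OF G.graded_subgroup_iff])
  moreover have "?z \<in> a_kernel G H h" using z(1,3) unfolding a_kernel_def' by blast
  ultimately have kernel: "h (dsum_comp G Gg ?z n) = \<zero>\<^bsub>H\<^esub>" unfolding a_kernel_def' by blast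
  have comps: "dsum_comp G Gg ?z n \<in> carrier G" "dsum_comp G Gg y n \<in> carrier G"
    using G.dsum_comp_carrier z(1) assms(4) by blast+
  have "h (dsum_comp G Gg x n) = h (dsum_comp G Gg ?z n \<oplus>\<^bsub>G\<^esub> dsum_comp G Gg y n)"
    using G.dsum_comp_add[OF z(1) assms(4)] by (simp only: z(2))
  also have "\<dots> = h (dsum_comp G Gg ?z n) \<oplus>\<^bsub>H\<^esub> h (dsum_comp G Gg y n)"
    using comps by (rule hom_add)
  also have "\<dots> = h (dsum_comp G Gg y n)"
    using kernel comps(2) by (simp only: H.l_zero hom_closed)
  finally show ?thesis .
qed

lemma (in abelian_group_hom) is_dsum_image:
  assumes dsum: "is_dsum G Gg" and onto: "h ` carrier G = carrier H"
    and graded_kernel: "a_kernel G H h = int_sum G (\<lambda>n. a_kernel G H h \<inter> Gg n)"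
  shows "is_dsum H (\<lambda>n. h ` Gg n)"
  unfolding is_dsum_def
proof (intro conjI allI impI carrier_eq_int_sum_image[OF dsum onto])
  interpret G: dsum_group G Gg by (rule dsum_groupI[OF G.abelian_group_axioms dsum])
  show "subgroup (h ` Gg n) (add_monoid H)" for n
    by (rule group_hom.subgroup_img_is_subgroup[OF a_group_hom G.grading_subgroup])
  fix c d
  assume "(\<forall>n. c n \<in> h ` Gg n) \<and> (\<forall>n. d n \<in> h ` Gg n)
    \<and> finite {n. c n \<noteq> \<zero>\<^bsub>H\<^esub>} \<and> finite {n. d n \<noteq> \<zero>\<^bsub>H\<^esub>}
    \<and> finsum H c {n. c n \<noteq> \<zero>\<^bsub>H\<^esub>} = finsum H d {n. d n \<noteq> \<zero>\<^bsub>H\<^esub>}"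
  then have cd: "\<forall>n. c n \<in> h ` Gg n" "\<forall>n. d n \<in> h ` Gg n"
    "finite {n. c n \<noteq> \<zero>\<^bsub>H\<^esub>}" "finite {n. d n \<noteq> \<zero>\<^bsub>H\<^esub>}"
    "finsum H c {n. c n \<noteq> \<zero>\<^bsub>H\<^esub>} = finsum H d {n. d n \<noteq> \<zero>\<^bsub>H\<^esub>}" by blast+
  obtain c' where c': "\<forall>n. c' n \<in> Gg n" "finite {n. c' n \<noteq> \<zero>\<^bsub>G\<^esub>}" "\<And>n. h (c' n) = c n"
    using grading_image_lift[OF dsum cd(1,3)] by metis
  obtain d' where d': "\<forall>n. d' n \<in> Gg n" "finite {n. d' n \<noteq> \<zero>\<^bsub>G\<^esub>}" "\<And>n. h (d' n) = d n"
    using grading_image_lift[OF dsum cd(2,4)] by metis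
  define x where "x = finsum G c' {n. c' n \<noteq> \<zero>\<^bsub>G\<^esub>}"
  define y where "y = finsum G d' {n. d' n \<noteq> \<zero>\<^bsub>G\<^esub>}"
  have carr: "x \<in> carrier G" "y \<in> carrier G" "\<And>n. c' n \<in> carrier G" "\<And>n. d' n \<in> carrier G"
    unfolding x_def y_def using c'(1) d'(1) G.grading_subset by (auto intro!: G.finsum_closed)
  have "h x = h y"
    unfolding x_def y_def hom_finsum_support(2)[OF c'(2) carr(3)] hom_finsum_support(2)[OF d'(2) carr(4)]
    using cd(5) by (simp add: c'(3) d'(3))
  moreover have "dsum_comp G Gg x = c'" "dsum_comp G Gg y = d'"
    using c'(1,2) d'(1,2) unfolding x_def y_def by (simp_all add: G.dsum_comp_eq)
  ultimately have "h (c' n) = h (d' n)" for n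
    using dsum_comp_cong[OF dsum graded_kernel carr(1,2)] by metis
  then show "c = d" by (simp add: c'(3) d'(3) fun_eq_iff)
qed

section \<open>Semi-graded modules and their submodules\<close>

lemma lmodule_abelian_group: "lmodule R M \<Longrightarrow> abelian_group M"
  by (simp add: lmodule_def)

lemma lmodule_smult_closed:
  "lmodule R M \<Longrightarrow> a \<in> carrier R \<Longrightarrow> x \<in> carrier M \<Longrightarrow> a \<odot>\<^bsub>M\<^esub> x \<in> carrier M"
  by (simp add: lmodule_def module_axioms_def)

lemma lmodule_smult_add_left:
  "lmodule R M \<Longrightarrow> a \<in> carrier R \<Longrightarrow> b \<in> carrier R \<Longrightarrow> x \<in> carrier M \<Longrightarrow>
    (a \<oplus>\<^bsub>R\<^esub> b) \<odot>\<^bsub>M\<^esub> x = a \<odot>\<^bsub>M\<^esub> x \<oplus>\<^bsub>M\<^esub> b \<odot>\<^bsub>M\<^esub> x"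
  by (simp add: lmodule_def module_axioms_def)

lemma lmodule_smult_add_right:
  "lmodule R M \<Longrightarrow> a \<in> carrier R \<Longrightarrow> x \<in> carrier M \<Longrightarrow> y \<in> carrier M \<Longrightarrow>
    a \<odot>\<^bsub>M\<^esub> (x \<oplus>\<^bsub>M\<^esub> y) = a \<odot>\<^bsub>M\<^esub> x \<oplus>\<^bsub>M\<^esub> a \<odot>\<^bsub>M\<^esub> y"
  by (simp add: lmodule_def module_axioms_def)

lemma lmodule_smult_assoc:
  "lmodule R M \<Longrightarrow> a \<in> carrier R \<Longrightarrow> b \<in> carrier R \<Longrightarrow> x \<in> carrier M \<Longrightarrow>
    (a \<otimes>\<^bsub>R\<^esub> b) \<odot>\<^bsub>M\<^esub> x = a \<odot>\<^bsub>M\<^esub> (b \<odot>\<^bsub>M\<^esub> x)"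
  by (simp add: lmodule_def module_axioms_def)

lemma lmodule_smult_one: "lmodule R M \<Longrightarrow> x \<in> carrier M \<Longrightarrow> \<one>\<^bsub>R\<^esub> \<odot>\<^bsub>M\<^esub> x = x"
  by (simp add: lmodule_def module_axioms_def)

lemma lmodule_smult_zero_left:
  assumes "lmodule R M" "x \<in> carrier M"
  shows "\<zero>\<^bsub>R\<^esub> \<odot>\<^bsub>M\<^esub> x = \<zero>\<^bsub>M\<^esub>"
proof -
  interpret M: abelian_group M using lmodule_abelian_group[OF assms(1)] .
  interpret R: ring R using assms(1) by (simp add: lmodule_def)
  have "\<zero>\<^bsub>R\<^esub> \<odot>\<^bsub>M\<^esub> x \<oplus>\<^bsub>M\<^esub> \<zero>\<^bsub>R\<^esub> \<odot>\<^bsub>M\<^esub> x = \<zero>\<^bsub>R\<^esub> \<odot>\<^bsub>M\<^esub> x"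
    using lmodule_smult_add_left[OF assms(1) R.zero_closed R.zero_closed assms(2)] by simp
  then show ?thesis
    using lmodule_smult_closed[OF assms(1) R.zero_closed assms(2)] M.add.l_cancel_one by blast
qed

lemma lmodule_smult_zero_right:
  assumes "lmodule R M" "a \<in> carrier R"
  shows "a \<odot>\<^bsub>M\<^esub> \<zero>\<^bsub>M\<^esub> = \<zero>\<^bsub>M\<^esub>"
proof -
  interpret M: abelian_group M using lmodule_abelian_group[OF assms(1)] .
  have "a \<odot>\<^bsub>M\<^esub> \<zero>\<^bsub>M\<^esub> \<oplus>\<^bsub>M\<^esub> a \<odot>\<^bsub>M\<^esub> \<zero>\<^bsub>M\<^esub> = a \<odot>\<^bsub>M\<^esub> \<zero>\<^bsub>M\<^esub>"
    using lmodule_smult_add_right[OF assms, of "\<zero>\<^bsub>M\<^esub>" "\<zero>\<^bsub>M\<^esub>"] by simp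
  then show ?thesis
    using lmodule_smult_closed[OF assms M.zero_closed] M.add.l_cancel_one by blast
qed

lemma abelian_group_surj_image:
  assumes "abelian_group M" "f ` carrier M = carrier P"
    "\<And>x y. x \<in> carrier M \<Longrightarrow> y \<in> carrier M \<Longrightarrow> f (x \<oplus>\<^bsub>M\<^esub> y) = f x \<oplus>\<^bsub>P\<^esub> f y"
    "f \<zero>\<^bsub>M\<^esub> = \<zero>\<^bsub>P\<^esub>"
  shows "abelian_group P"
proof -
  interpret M: abelian_group M by fact
  note add = assms(3)[symmetric] and zero = assms(4)[symmetric]
  show ?thesis
  proof (rule abelian_groupI, unfold assms(2)[symmetric])
    fix X Y Z assume "X \<in> f ` carrier M" "Y \<in> f ` carrier M" "Z \<in> f ` carrier M"
    then obtain x y z where "x \<in> carrier M" "y \<in> carrier M" "z \<in> carrier M" "X = f x" "Y = f y" "Z = f z"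
      by blast
    then show "X \<oplus>\<^bsub>P\<^esub> Y \<oplus>\<^bsub>P\<^esub> Z = X \<oplus>\<^bsub>P\<^esub> (Y \<oplus>\<^bsub>P\<^esub> Z)"
      by (simp add: add M.a_assoc)
  next
    fix X Y assume "X \<in> f ` carrier M" "Y \<in> f ` carrier M"
    then obtain x y where "x \<in> carrier M" "y \<in> carrier M" "X = f x" "Y = f y" by blast
    then show "X \<oplus>\<^bsub>P\<^esub> Y \<in> f ` carrier M" "X \<oplus>\<^bsub>P\<^esub> Y = Y \<oplus>\<^bsub>P\<^esub> X"
      by (simp_all add: add M.a_comm)
  next
    fix X assume "X \<in> f ` carrier M"
    then obtain x where x: "x \<in> carrier M" "X = f x" by blast
    then show "\<zero>\<^bsub>P\<^esub> \<oplus>\<^bsub>P\<^esub> X = X" by (simp add: zero add)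
    have "f (\<ominus>\<^bsub>M\<^esub> x) \<oplus>\<^bsub>P\<^esub> X = \<zero>\<^bsub>P\<^esub>" using x by (simp add: zero add M.l_neg)
    with x show "\<exists>Y\<in>f ` carrier M. Y \<oplus>\<^bsub>P\<^esub> X = \<zero>\<^bsub>P\<^esub>" by blast
  qed (simp add: zero)
qed

lemma lmodule_surj_image:
  assumes "lmodule R M" "ring S" "\<phi> \<in> ring_hom R S" "\<phi> ` carrier R = carrier S"
    "f ` carrier M = carrier P"
    "\<And>x y. x \<in> carrier M \<Longrightarrow> y \<in> carrier M \<Longrightarrow> f (x \<oplus>\<^bsub>M\<^esub> y) = f x \<oplus>\<^bsub>P\<^esub> f y"
    "f \<zero>\<^bsub>M\<^esub> = \<zero>\<^bsub>P\<^esub>"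
    "\<And>a x. a \<in> carrier R \<Longrightarrow> x \<in> carrier M \<Longrightarrow> f (a \<odot>\<^bsub>M\<^esub> x) = \<phi> a \<odot>\<^bsub>P\<^esub> f x"
  shows "lmodule S P"
proof -
  interpret R: ring R using assms(1) by (simp add: lmodule_def)
  interpret M: abelian_group M using lmodule_abelian_group[OF assms(1)] .
  note add = assms(6)[symmetric] and smult = assms(8)[symmetric]
  have closed: "x \<oplus>\<^bsub>M\<^esub> y \<in> carrier M" "a \<odot>\<^bsub>M\<^esub> x \<in> carrier M"
    if "a \<in> carrier R" "x \<in> carrier M" "y \<in> carrier M" for a x y
    using that lmodule_smult_closed[OF assms(1)] by simp_all
  have "module_axioms S P"
    unfolding module_axioms_def assms(4)[symmetric] assms(5)[symmetric]
  proof (intro conjI ballI allI impI; elim imageE; clarify)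
    fix a b x assume "a \<in> carrier R" "b \<in> carrier R" "x \<in> carrier M"
    then show "(\<phi> a \<oplus>\<^bsub>S\<^esub> \<phi> b) \<odot>\<^bsub>P\<^esub> f x = \<phi> a \<odot>\<^bsub>P\<^esub> f x \<oplus>\<^bsub>P\<^esub> \<phi> b \<odot>\<^bsub>P\<^esub> f x"
      "\<phi> a \<otimes>\<^bsub>S\<^esub> \<phi> b \<odot>\<^bsub>P\<^esub> f x = \<phi> a \<odot>\<^bsub>P\<^esub> (\<phi> b \<odot>\<^bsub>P\<^esub> f x)"
      using assms(3) lmodule_smult_add_left[OF assms(1)] lmodule_smult_assoc[OF assms(1)]
      by (simp_all add: ring_hom_add[symmetric] ring_hom_mult[symmetric] smult add closed)
  next
    fix a x y assume "a \<in> carrier R" "x \<in> carrier M" "y \<in> carrier M"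
    then show "\<phi> a \<odot>\<^bsub>P\<^esub> (f x \<oplus>\<^bsub>P\<^esub> f y) = \<phi> a \<odot>\<^bsub>P\<^esub> f x \<oplus>\<^bsub>P\<^esub> \<phi> a \<odot>\<^bsub>P\<^esub> f y"
      using lmodule_smult_add_right[OF assms(1)] by (simp add: smult add closed)
  next
    fix a x assume "a \<in> carrier R" "x \<in> carrier M"
    then show "\<phi> a \<odot>\<^bsub>P\<^esub> f x \<in> f ` carrier M" by (simp add: smult closed)
  next
    fix x assume "x \<in> carrier M"
    then show "\<one>\<^bsub>S\<^esub> \<odot>\<^bsub>P\<^esub> f x = f x"
      using assms(3) lmodule_smult_one[OF assms(1)] by (simp add: ring_hom_one[symmetric] smult)
  qed
  moreover have "abelian_group P"
    using abelian_group_surj_image[OF lmodule_abelian_group[OF assms(1)] assms(5,6,7)] .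
  ultimately show ?thesis using assms(2) unfolding lmodule_def by blast
qed

lemma lmodule_dsum_group: "lmodule R M \<Longrightarrow> is_dsum M Mg \<Longrightarrow> dsum_group M Mg"
  by (intro dsum_groupI lmodule_abelian_group)

lemma lmod_hom_abelian_group_hom:
  assumes "lmodule R M" "lmodule R N" "f \<in> lmod_hom R M N"
  shows "abelian_group_hom M N f"
proof -
  interpret M: abelian_group M using lmodule_abelian_group[OF assms(1)] .
  interpret N: abelian_group N using lmodule_abelian_group[OF assms(2)] .
  show ?thesis
    using assms(3) unfolding lmod_hom_def
    by (intro abelian_group_homI group_hom.intro group_hom_axioms.intro M.abelian_group_axioms
        N.abelian_group_axioms M.a_group N.a_group) (auto simp: hom_def)
qed

lemma (in abelian_group_hom) dsum_comp_hom:
  assumes "is_dsum G Gg" "is_dsum H Hg" "\<And>n. h ` Gg n \<subseteq> Hg n" "x \<in> carrier G"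
  shows "dsum_comp H Hg (h x) = (\<lambda>n. h (dsum_comp G Gg x n))"
proof -
  interpret G: dsum_group G Gg by (rule dsum_groupI[OF G.abelian_group_axioms assms(1)])
  interpret H: dsum_group H Hg by (rule dsum_groupI[OF H.abelian_group_axioms assms(2)])
  note comp = G.dsum_decomposition[OF assms(4)]
  note image = hom_finsum_support[OF comp(2) G.dsum_comp_carrier[OF assms(4)]]
  show ?thesis
    using comp(1,3) image assms(3) by (intro H.dsum_comp_eq) auto
qed

lemma sg_moduleD:
  assumes "sg_module R Rg M Mg"
  shows "lmodule R M" "is_dsum M Mg"
  using assms by (simp_all add: sg_module_def)

lemma sg_homD:
  assumes "f \<in> sg_hom R M Mg N Ng"
  shows "x \<in> carrier M \<Longrightarrow> f x \<in> carrier N"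
    and "x \<in> carrier M \<Longrightarrow> y \<in> carrier M \<Longrightarrow> f (x \<oplus>\<^bsub>M\<^esub> y) = f x \<oplus>\<^bsub>N\<^esub> f y"
    and "a \<in> carrier R \<Longrightarrow> x \<in> carrier M \<Longrightarrow> f (a \<odot>\<^bsub>M\<^esub> x) = a \<odot>\<^bsub>N\<^esub> f x"
    and "x \<in> Mg n \<Longrightarrow> f x \<in> Ng n"
    and "f \<in> extensional (carrier M)"
  using assms unfolding sg_hom_def lmod_hom_def by (auto simp: image_subset_iff)

lemma sg_hom_compose:
  assumes "lmodule R M" "is_dsum M Mg" "f \<in> sg_hom R M Mg N Ng" "g \<in> sg_hom R N Ng K Kg"
  shows "compose (carrier M) g f \<in> sg_hom R M Mg K Kg"
proof -
  interpret M: dsum_group M Mg using lmodule_dsum_group[OF assms(1,2)] .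
  show ?thesis
    using sg_homD[OF assms(3)] sg_homD[OF assms(4)] lmodule_smult_closed[OF assms(1)]
      subsetD[OF M.grading_subset]
    unfolding sg_hom_def lmod_hom_def compose_def by (auto simp: Pi_iff)
qed

lemma sg_submodule_iff:
  assumes "lmodule R M" "is_dsum M Mg"
  shows "sg_submodule R M Mg N \<longleftrightarrow> subgroup N (add_monoid M)
    \<and> (\<forall>a\<in>carrier R. \<forall>x\<in>N. a \<odot>\<^bsub>M\<^esub> x \<in> N) \<and> (\<forall>x\<in>N. \<forall>n. dsum_comp M Mg x n \<in> N)"
proof -
  interpret dsum_group M Mg using lmodule_dsum_group[OF assms] .
  have "N \<subseteq> carrier M" if "subgroup N (add_monoid M)"
    using subgroup.subset[OF that] by simp
  then show ?thesis
    unfolding sg_submodule_def lsubmodule_def using graded_subgroup_iff[of N] by blast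
qed

lemma sg_submodule_Inter:
  assumes "lmodule R M" "is_dsum M Mg" "F \<noteq> {}" "\<And>N. N \<in> F \<Longrightarrow> sg_submodule R M Mg N"
  shows "sg_submodule R M Mg (\<Inter>F)"
proof -
  interpret abelian_group M using lmodule_abelian_group[OF assms(1)] .
  have "subgroup (\<Inter>F) (add_monoid M)"
    using assms(3,4) sg_submodule_iff[OF assms(1,2)] by (intro add.subgroups_Inter) blast+
  with assms(4) show ?thesis
    unfolding sg_submodule_iff[OF assms(1,2)] by blast
qed

lemma sg_submodule_carrier:
  assumes "lmodule R M" "is_dsum M Mg"
  shows "sg_submodule R M Mg (carrier M)"
proof -
  interpret dsum_group M Mg using lmodule_dsum_group[OF assms] .
  show ?thesis
    unfolding sg_submodule_iff[OF assms]
    using add.subgroup_self lmodule_smult_closed[OF assms(1)] dsum_comp_carrier by simp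
qed

lemma sg_submodule_zero:
  assumes "lmodule R M" "is_dsum M Mg"
  shows "sg_submodule R M Mg {\<zero>\<^bsub>M\<^esub>}"
proof -
  interpret dsum_group M Mg using lmodule_dsum_group[OF assms] .
  show ?thesis
    unfolding sg_submodule_iff[OF assms]
    using add.triv_subgroup lmodule_smult_zero_right[OF assms(1)] dsum_comp_zero by simp
qed

lemma sg_submodule_vimage:
  assumes "lmodule R M" "is_dsum M Mg" "lmodule R M'" "is_dsum M' Mg'"
    "\<beta> \<in> sg_hom R M Mg M' Mg'" "sg_submodule R M' Mg' P"
  shows "sg_submodule R M Mg {x \<in> carrier M. \<beta> x \<in> P}"
proof -
  interpret abelian_group_hom M M' \<beta>
    using lmod_hom_abelian_group_hom[OF assms(1,3)] assms(5) by (simp add: sg_hom_def)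
  interpret M: dsum_group M Mg using lmodule_dsum_group[OF assms(1,2)] .
  have P: "subgroup P (add_monoid M')" "\<And>a x. a \<in> carrier R \<Longrightarrow> x \<in> P \<Longrightarrow> a \<odot>\<^bsub>M'\<^esub> x \<in> P"
    "\<And>x n. x \<in> P \<Longrightarrow> dsum_comp M' Mg' x n \<in> P"
    using assms(6) unfolding sg_submodule_iff[OF assms(3,4)] by auto
  let ?Q = "{x \<in> carrier M. \<beta> x \<in> P}"
  have "subgroup ?Q (add_monoid M)"
  proof (rule G.add.subgroupI)
    show "?Q \<noteq> {}" using subgroup.one_closed[OF P(1)] by force
  next
    fix x assume x: "x \<in> ?Q"
    have "\<ominus>\<^bsub>M'\<^esub> \<beta> x \<in> P"
      using subgroup.m_inv_closed[OF P(1)] x by (simp add: a_inv_def)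
    with x show "\<ominus>\<^bsub>M\<^esub> x \<in> ?Q" by simp
  next
    fix x y assume "x \<in> ?Q" "y \<in> ?Q"
    then show "x \<oplus>\<^bsub>M\<^esub> y \<in> ?Q" using subgroup.m_closed[OF P(1)] by simp
  qed auto
  moreover have "a \<odot>\<^bsub>M\<^esub> x \<in> ?Q" if "a \<in> carrier R" "x \<in> ?Q" for a x
    using that P(2) sg_homD(3)[OF assms(5)] lmodule_smult_closed[OF assms(1)] by simp
  moreover have "dsum_comp M Mg x n \<in> ?Q" if "x \<in> ?Q" for x n
  proof -
    have "\<beta> ` Mg k \<subseteq> Mg' k" for k using sg_homD(4)[OF assms(5)] by blast
    then have "\<beta> (dsum_comp M Mg x n) = dsum_comp M' Mg' (\<beta> x) n"
      using dsum_comp_hom[OF assms(2,4)] that by simp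
    then show ?thesis using that P(3) M.dsum_comp_carrier by simp
  qed
  ultimately show ?thesis
    unfolding sg_submodule_iff[OF assms(1,2)] by blast
qed

lemma sg_gen_least: "sg_submodule R M Mg N \<Longrightarrow> X \<subseteq> N \<Longrightarrow> sg_gen R M Mg X \<subseteq> N"
  unfolding sg_gen_def by blast

lemma sg_gen:
  assumes "lmodule R M" "is_dsum M Mg" "X \<subseteq> carrier M"
  shows "sg_submodule R M Mg (sg_gen R M Mg X)" "X \<subseteq> sg_gen R M Mg X"
proof -
  have "carrier M \<in> {N. sg_submodule R M Mg N \<and> X \<subseteq> N}"
    using sg_submodule_carrier[OF assms(1,2)] assms(3) by blast
  then show "sg_submodule R M Mg (sg_gen R M Mg X)"
    unfolding sg_gen_def by (intro sg_submodule_Inter[OF assms(1,2)]) blast+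
  show "X \<subseteq> sg_gen R M Mg X" unfolding sg_gen_def by blast
qed

lemma sg_hom_image_sg_gen:
  assumes "lmodule R M" "is_dsum M Mg" "lmodule R M'" "is_dsum M' Mg'"
    "\<beta> \<in> sg_hom R M Mg M' Mg'" "sg_submodule R M' Mg' P" "X \<subseteq> carrier M" "\<beta> ` X \<subseteq> P"
  shows "\<beta> ` sg_gen R M Mg X \<subseteq> P"
proof -
  have "sg_gen R M Mg X \<subseteq> {x \<in> carrier M. \<beta> x \<in> P}"
    using assms(7,8) by (intro sg_gen_least sg_submodule_vimage[OF assms(1-6)]) auto
  then show ?thesis by blast
qed


section \<open>Restriction of scalars and the quotient \<open>M/\<langle>JM\<rangle>\<close>\<close>

lemma (in abelian_subgroup) a_rcos_absorb:
  "h \<in> H \<Longrightarrow> x \<in> carrier G \<Longrightarrow> H +> (h \<oplus> x) = H +> x"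
  using a_coset_add_assoc[OF a_subset a_Hcarr, of h x] a_rcos_const by simp

lemma (in abelian_subgroup) the_elem_image_rcos:
  assumes "x \<in> carrier G" "\<And>h. h \<in> H \<Longrightarrow> f (h \<oplus> x) = f x"
  shows "the_elem (f ` (H +> x)) = f x"
proof -
  have "f ` (H +> x) = {f x}"
    using assms zero_closed unfolding a_r_coset_def' by force
  then show ?thesis by simp
qed

lemma push_carrier [simp]: "carrier (push R J N) = carrier N"
  and push_add [simp]: "add (push R J N) = add N"
  and push_zero [simp]: "zero (push R J N) = zero N"
  and push_smult [simp]: "smult (push R J N) r x = smult N (J +>\<^bsub>R\<^esub> r) x"
  by (simp_all add: push_def)

lemma push_finsum: "finsum (push R J N) f A = finsum N f A"
  by (simp add: finsum_def finprod_def push_def)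

lemma push_subgroup: "subgroup S (add_monoid (push R J N)) = subgroup S (add_monoid N)"
  by (simp add: subgroup_def m_inv_def push_def)

lemma push_is_dsum: "is_dsum (push R J N) Ng = is_dsum N Ng"
  unfolding is_dsum_def int_sum_def push_finsum push_subgroup by simp

lemma push_int_sum_le: "int_sum_le (push R J N) Ng k = int_sum_le N Ng k"
  unfolding int_sum_le_def int_sum_def push_finsum by simp

lemma push_abelian_group:
  assumes "abelian_group N"
  shows "abelian_group (push R J N)"
proof -
  interpret N: abelian_group N by fact
  show ?thesis
    by (rule abelian_groupI) (auto simp: N.a_ac intro: N.l_neg N.a_inv_closed)
qed

definition pull_proj :: "('r, 'c) ring_scheme \<Rightarrow> 'r set \<Rightarrow> ('r, 'm) module \<Rightarrow> (int \<Rightarrow> 'm set)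
    \<Rightarrow> 'm \<Rightarrow> 'm set" where
  "pull_proj R J M Mg = (\<lambda>x\<in>carrier M. pull_sub R J M Mg +>\<^bsub>M\<^esub> x)"

context ideal
begin

lemma rcos_carrier: "a \<in> carrier R \<Longrightarrow> I +> a \<in> carrier (R Quot I)"
  using ring_hom_closed[OF rcos_ring_hom] .

lemma rcos_add: "a \<in> carrier R \<Longrightarrow> b \<in> carrier R \<Longrightarrow> I +> (a \<oplus> b) = (I +> a) \<oplus>\<^bsub>R Quot I\<^esub> (I +> b)"
  using ring_hom_add[OF rcos_ring_hom] .

lemma rcos_mult: "a \<in> carrier R \<Longrightarrow> b \<in> carrier R \<Longrightarrow> I +> (a \<otimes> b) = (I +> a) \<otimes>\<^bsub>R Quot I\<^esub> (I +> b)"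
  using ring_hom_mult[OF rcos_ring_hom] .

lemma rcos_one: "I +> \<one> = \<one>\<^bsub>R Quot I\<^esub>"
  using ring_hom_one[OF rcos_ring_hom] .

lemma rcos_ideal_member: "j \<in> I \<Longrightarrow> I +> j = \<zero>\<^bsub>R Quot I\<^esub>"
  using abelian_subgroup.a_rcos_const[OF abelian_subgroupI3[OF is_additive_subgroup is_abelian_group]]
  by (simp add: FactRing_def)

lemma quot_carrierE:
  assumes "A \<in> carrier (R Quot I)"
  obtains a where "a \<in> carrier R" "A = I +> a"
  using assms unfolding FactRing_def A_RCOSETS_def' by auto

lemma push_lmodule:
  assumes "lmodule (R Quot I) N"
  shows "lmodule R (push R I N)"
proof -
  have "module_axioms R (push R I N)"
    unfolding module_axioms_def push_carrier push_add push_smult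
    using lmodule_smult_closed[OF assms] lmodule_smult_add_left[OF assms]
      lmodule_smult_assoc[OF assms] lmodule_smult_add_right[OF assms] lmodule_smult_one[OF assms]
    by (simp add: rcos_carrier rcos_add rcos_mult rcos_one)
  then show ?thesis
    using assms ring_axioms push_abelian_group unfolding lmodule_def by blast
qed

lemma sg_module_push:
  assumes "sg_module (R Quot I) (quot_grading R I Rg) N Ng"
  shows "sg_module R Rg (push R I N) Ng"
  using assms push_lmodule
  unfolding sg_module_def push_is_dsum push_int_sum_le quot_grading_def by auto

lemma sg_hom_push:
  assumes "\<gamma> \<in> sg_hom (R Quot I) N Ng N' Ng'"
  shows "\<gamma> \<in> sg_hom R (push R I N) Ng (push R I N') Ng'"
  using assms rcos_carrier unfolding sg_hom_def lmod_hom_def by simp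

end

locale ideal_graded_module = ideal I R for I and R (structure) +
  fixes M :: "('a, 'm) module" and Mg :: "int \<Rightarrow> 'm set"
  assumes lmodule: "lmodule R M" and is_dsum: "is_dsum M Mg"
begin

sublocale M: dsum_group M Mg
  by (rule lmodule_dsum_group[OF lmodule is_dsum])

lemma ideal_times_subset: "ideal_times I M \<subseteq> carrier M"
  unfolding ideal_times_def using lmodule_smult_closed[OF lmodule] a_subset by blast

lemma pull_sub_sg_submodule: "sg_submodule R M Mg (pull_sub R I M Mg)"
  unfolding pull_sub_def by (rule sg_gen(1)[OF lmodule is_dsum ideal_times_subset])

lemma ideal_times_subset_pull_sub: "ideal_times I M \<subseteq> pull_sub R I M Mg"
  unfolding pull_sub_def by (rule sg_gen(2)[OF lmodule is_dsum ideal_times_subset])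

sublocale L: abelian_subgroup "pull_sub R I M Mg" M
  using pull_sub_sg_submodule unfolding sg_submodule_iff[OF lmodule is_dsum]
  by (intro abelian_subgroupI3 additive_subgroup.intro M.abelian_group_axioms) blast

lemma pull_proj_carrier: "x \<in> carrier M \<Longrightarrow> pull_proj R I M Mg x \<in> carrier (pull R I M Mg)"
  using M.a_rcosetsI[OF L.a_subset] by (simp add: pull_proj_def pull_def Let_def)

lemma pull_proj_onto: "pull_proj R I M Mg ` carrier M = carrier (pull R I M Mg)"
  unfolding pull_proj_def by (auto simp: pull_def Let_def A_RCOSETS_def')

lemma pull_proj_add:
  "x \<in> carrier M \<Longrightarrow> y \<in> carrier M \<Longrightarrow>
    pull_proj R I M Mg (x \<oplus>\<^bsub>M\<^esub> y) = pull_proj R I M Mg x \<oplus>\<^bsub>pull R I M Mg\<^esub> pull_proj R I M Mg y"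
  using L.a_rcos_sum by (simp add: pull_proj_def pull_def Let_def set_add_def)

lemma pull_proj_zero: "pull_proj R I M Mg \<zero>\<^bsub>M\<^esub> = \<zero>\<^bsub>pull R I M Mg\<^esub>"
  using L.a_subset by (simp add: pull_proj_def pull_def Let_def)

lemma pull_proj_kernel: "a_kernel M (pull R I M Mg) (pull_proj R I M Mg) = pull_sub R I M Mg"
proof -
  have "x \<in> pull_sub R I M Mg \<longleftrightarrow> pull_sub R I M Mg +>\<^bsub>M\<^esub> x = pull_sub R I M Mg"
    if "x \<in> carrier M" for x
    using L.a_rcos_const L.a_rcos_self[OF that] by auto
  then show ?thesis
    using L.a_subset unfolding a_kernel_def' pull_proj_def by (auto simp: pull_def Let_def)
qed

lemma pull_smult:
  assumes "a \<in> carrier R" "x \<in> carrier M"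
  shows "(I +> a) \<odot>\<^bsub>pull R I M Mg\<^esub> pull_proj R I M Mg x = pull_proj R I M Mg (a \<odot>\<^bsub>M\<^esub> x)"
proof -
  let ?L = "pull_sub R I M Mg"
  have ax: "a \<odot>\<^bsub>M\<^esub> x \<in> carrier M" using lmodule_smult_closed[OF lmodule assms] .
  have rep: "?L +>\<^bsub>M\<^esub> (a' \<odot>\<^bsub>M\<^esub> y) = ?L +>\<^bsub>M\<^esub> (a \<odot>\<^bsub>M\<^esub> x)"
    if "a' \<in> I +> a" "y \<in> ?L +>\<^bsub>M\<^esub> x" for a' y
  proof -
    from that(1) obtain j where j: "j \<in> I" "a' = j \<oplus> a"
      unfolding a_r_coset_def' by (elim UN_E singletonE)
    from that(2) obtain l where l: "l \<in> ?L" "y = l \<oplus>\<^bsub>M\<^esub> x"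
      unfolding a_r_coset_def' by (elim UN_E singletonE)
    have jl: "j \<in> carrier R" "l \<in> carrier M" "y \<in> carrier M"
      using j(1) l a_subset L.a_subset assms(2) by auto
    have "a' \<odot>\<^bsub>M\<^esub> y = j \<odot>\<^bsub>M\<^esub> y \<oplus>\<^bsub>M\<^esub> a \<odot>\<^bsub>M\<^esub> y"
      unfolding j(2) by (rule lmodule_smult_add_left[OF lmodule jl(1) assms(1) jl(3)])
    moreover have "a \<odot>\<^bsub>M\<^esub> y = a \<odot>\<^bsub>M\<^esub> l \<oplus>\<^bsub>M\<^esub> a \<odot>\<^bsub>M\<^esub> x"
      unfolding l(2) by (rule lmodule_smult_add_right[OF lmodule assms(1) jl(2) assms(2)])
    ultimately have "a' \<odot>\<^bsub>M\<^esub> y = (j \<odot>\<^bsub>M\<^esub> y \<oplus>\<^bsub>M\<^esub> a \<odot>\<^bsub>M\<^esub> l) \<oplus>\<^bsub>M\<^esub> a \<odot>\<^bsub>M\<^esub> x"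
      using jl assms lmodule_smult_closed[OF lmodule] by (simp add: M.a_assoc)
    moreover have "j \<odot>\<^bsub>M\<^esub> y \<in> ?L"
      using j(1) jl(3) ideal_times_subset_pull_sub unfolding ideal_times_def by blast
    moreover have "a \<odot>\<^bsub>M\<^esub> l \<in> ?L"
      using pull_sub_sg_submodule assms(1) l(1) unfolding sg_submodule_iff[OF lmodule is_dsum] by blast
    ultimately show ?thesis using L.a_rcos_absorb[OF L.a_closed ax] by simp
  qed
  have "a \<in> I +> a" "x \<in> ?L +>\<^bsub>M\<^esub> x"
    using a_rcos_self[OF assms(1)] L.a_rcos_self[OF assms(2)] by auto
  then have "(\<Union>a'\<in>I +> a. \<Union>y\<in>?L +>\<^bsub>M\<^esub> x. ?L +>\<^bsub>M\<^esub> (a' \<odot>\<^bsub>M\<^esub> y)) = ?L +>\<^bsub>M\<^esub> (a \<odot>\<^bsub>M\<^esub> x)"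
    using rep by blast
  then show ?thesis using assms(2) ax by (simp add: pull_def Let_def pull_proj_def)
qed

lemma pull_lmodule: "lmodule (R Quot I) (pull R I M Mg)"
proof (rule lmodule_surj_image[OF lmodule quotient_is_ring rcos_ring_hom _ pull_proj_onto])
  show "(+>) I ` carrier R = carrier (R Quot I)"
    by (auto simp: FactRing_def A_RCOSETS_def')
qed (simp_all add: pull_proj_add pull_proj_zero pull_smult)

lemma pull_abelian_group: "abelian_group (pull R I M Mg)"
  using pull_lmodule by (rule lmodule_abelian_group)

lemma pull_proj_hom: "abelian_group_hom M (pull R I M Mg) (pull_proj R I M Mg)"
  using pull_proj_carrier pull_proj_add
  by (intro abelian_group_homI M.abelian_group_axioms pull_abelian_group group_hom.intro
      group_hom_axioms.intro M.a_group abelian_group.a_group) (auto simp: hom_def)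

lemma pull_grading_eq: "pull_grading R I M Mg = (\<lambda>n. pull_proj R I M Mg ` Mg n)"
proof
  fix n
  show "pull_grading R I M Mg n = pull_proj R I M Mg ` Mg n"
    unfolding pull_grading_def pull_proj_def using M.grading_subset by (intro image_cong) auto
qed

lemma pull_is_dsum: "is_dsum (pull R I M Mg) (pull_grading R I M Mg)"
  unfolding pull_grading_eq
  by (rule abelian_group_hom.is_dsum_image[OF pull_proj_hom is_dsum pull_proj_onto])
    (use pull_sub_sg_submodule in \<open>simp add: pull_proj_kernel sg_submodule_def\<close>)

lemma pull_proj_sg_hom:
  "pull_proj R I M Mg \<in> sg_hom R M Mg (push R I (pull R I M Mg)) (pull_grading R I M Mg)"
  using pull_proj_carrier pull_proj_add pull_smult lmodule_smult_closed[OF lmodule]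
  unfolding sg_hom_def lmod_hom_def pull_grading_eq by (auto simp: pull_proj_def)

lemma pull_carrierE:
  assumes "X \<in> carrier (pull R I M Mg)"
  obtains x where "x \<in> carrier M" "X = pull_proj R I M Mg x"
  using assms pull_proj_onto by blast

lemma pull_fun_eqI:
  assumes "\<phi> \<in> extensional (carrier (pull R I M Mg))" "\<psi> \<in> extensional (carrier (pull R I M Mg))"
    "\<And>x. x \<in> carrier M \<Longrightarrow> \<phi> (pull_proj R I M Mg x) = \<psi> (pull_proj R I M Mg x)"
  shows "\<phi> = \<psi>"
  by (rule extensionalityI[OF assms(1,2)]) (metis assms(3) pull_carrierE)

end

context ideal
begin

lemma ideal_graded_moduleI: "lmodule R M \<Longrightarrow> is_dsum M Mg \<Longrightarrow> ideal_graded_module I R M Mg"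
  by (intro ideal_graded_module.intro ideal_graded_module_axioms.intro is_ideal)

lemma sg_module_pull:
  assumes "sg_ring R Rg" "sg_module R Rg M Mg"
  shows "sg_module (R Quot I) (quot_grading R I Rg) (pull R I M Mg) (pull_grading R I M Mg)"
  unfolding sg_module_def
proof (intro conjI allI impI ballI)
  interpret M: ideal_graded_module I R M Mg by (rule ideal_graded_moduleI[OF sg_moduleD[OF assms(2)]])
  show "lmodule (R Quot I) (pull R I M Mg)" "is_dsum (pull R I M Mg) (pull_grading R I M Mg)"
    by (rule M.pull_lmodule, rule M.pull_is_dsum)
  fix m n A X assume "0 \<le> m" "A \<in> quot_grading R I Rg m" "X \<in> pull_grading R I M Mg n"
  then obtain a x where ax: "a \<in> Rg m" "A = I +> a" "x \<in> Mg n" "X = pull_proj R I M Mg x"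
    unfolding quot_grading_def M.pull_grading_eq by blast
  have "a \<in> carrier R"
    using ax(1) assms(1) subgroup.subset unfolding sg_ring_def is_dsum_def by fastforce
  moreover have "x \<in> carrier M" using ax(3) M.M.grading_subset by blast
  ultimately have "A \<odot>\<^bsub>pull R I M Mg\<^esub> X = pull_proj R I M Mg (a \<odot>\<^bsub>M\<^esub> x)"
    using ax(2,4) M.pull_smult by simp
  moreover have "a \<odot>\<^bsub>M\<^esub> x \<in> int_sum_le M Mg (m + n)"
    using assms(2) \<open>0 \<le> m\<close> ax(1,3) unfolding sg_module_def by blast
  then have "pull_proj R I M Mg (a \<odot>\<^bsub>M\<^esub> x)
      \<in> int_sum_le (pull R I M Mg) (\<lambda>n. pull_proj R I M Mg ` Mg n) (m + n)"
    by (rule abelian_group_hom.hom_int_sum_le[OF M.pull_proj_hom M.M.grading_subset, rotated]) simp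
  ultimately show "A \<odot>\<^bsub>pull R I M Mg\<^esub> X \<in> int_sum_le (pull R I M Mg) (pull_grading R I M Mg) (m + n)"
    unfolding M.pull_grading_eq by simp
qed

end

section \<open>The adjunction\<close>

context ideal
begin

lemma sg_hom_image_pull_sub:
  assumes "lmodule R M" "is_dsum M Mg" "lmodule R M'" "is_dsum M' Mg'" "\<beta> \<in> sg_hom R M Mg M' Mg'"
  shows "\<beta> ` pull_sub R I M Mg \<subseteq> pull_sub R I M' Mg'"
proof -
  interpret M: ideal_graded_module I R M Mg by (rule ideal_graded_moduleI[OF assms(1,2)])
  interpret M': ideal_graded_module I R M' Mg' by (rule ideal_graded_moduleI[OF assms(3,4)])
  have "\<beta> ` ideal_times I M \<subseteq> ideal_times I M'"
  proof
    fix z assume "z \<in> \<beta> ` ideal_times I M"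
    then obtain j x where "j \<in> I" "x \<in> carrier M" "z = \<beta> (j \<odot>\<^bsub>M\<^esub> x)"
      unfolding ideal_times_def by blast
    then show "z \<in> ideal_times I M'"
      using sg_homD(1,3)[OF assms(5)] a_subset unfolding ideal_times_def by blast
  qed
  then have "\<beta> ` ideal_times I M \<subseteq> pull_sub R I M' Mg'"
    using M'.ideal_times_subset_pull_sub by blast
  then show ?thesis
    unfolding pull_sub_def[of R I M]
    by (rule sg_hom_image_sg_gen[OF assms M'.pull_sub_sg_submodule M.ideal_times_subset])
qed

lemma sg_hom_push_vanishes:
  assumes "lmodule R M" "is_dsum M Mg" "lmodule (R Quot I) N" "is_dsum N Ng"
    "\<alpha> \<in> sg_hom R M Mg (push R I N) Ng" "l \<in> pull_sub R I M Mg"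
  shows "\<alpha> l = \<zero>\<^bsub>N\<^esub>"
proof -
  interpret M: ideal_graded_module I R M Mg by (rule ideal_graded_moduleI[OF assms(1,2)])
  have N: "lmodule R (push R I N)" "is_dsum (push R I N) Ng"
    using push_lmodule[OF assms(3)] assms(4) by (simp_all add: push_is_dsum)
  have "\<alpha> ` ideal_times I M \<subseteq> {\<zero>\<^bsub>push R I N\<^esub>}"
  proof
    fix z assume "z \<in> \<alpha> ` ideal_times I M"
    then obtain j x where jx: "j \<in> I" "x \<in> carrier M" "z = \<alpha> (j \<odot>\<^bsub>M\<^esub> x)"
      unfolding ideal_times_def by blast
    have "\<alpha> (j \<odot>\<^bsub>M\<^esub> x) = (I +> j) \<odot>\<^bsub>N\<^esub> \<alpha> x"
      using sg_homD(3)[OF assms(5)] jx(1,2) a_subset by auto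
    also have "\<dots> = \<zero>\<^bsub>N\<^esub>"
      using rcos_ideal_member[OF jx(1)] lmodule_smult_zero_left[OF assms(3)] sg_homD(1)[OF assms(5) jx(2)]
      by simp
    finally show "z \<in> {\<zero>\<^bsub>push R I N\<^esub>}" using jx(3) by simp
  qed
  then have "\<alpha> ` pull_sub R I M Mg \<subseteq> {\<zero>\<^bsub>push R I N\<^esub>}"
    unfolding pull_sub_def
    by (rule sg_hom_image_sg_gen[OF assms(1,2) N assms(5) sg_submodule_zero[OF N] M.ideal_times_subset])
  then show ?thesis using assms(6) by auto
qed

lemma adj_map_pull_proj:
  assumes "lmodule R M" "is_dsum M Mg" "lmodule (R Quot I) N" "is_dsum N Ng"
    "\<alpha> \<in> sg_hom R M Mg (push R I N) Ng" "x \<in> carrier M"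
  shows "adj_map R I M Mg \<alpha> (pull_proj R I M Mg x) = \<alpha> x"
proof -
  interpret M: ideal_graded_module I R M Mg by (rule ideal_graded_moduleI[OF assms(1,2)])
  interpret N: abelian_group N using lmodule_abelian_group[OF assms(3)] .
  have "the_elem (\<alpha> ` (pull_sub R I M Mg +>\<^bsub>M\<^esub> x)) = \<alpha> x"
  proof (rule M.L.the_elem_image_rcos[OF assms(6)])
    fix l assume "l \<in> pull_sub R I M Mg"
    then show "\<alpha> (l \<oplus>\<^bsub>M\<^esub> x) = \<alpha> x"
      using sg_homD(1,2)[OF assms(5)] sg_hom_push_vanishes[OF assms(1-5)] M.L.a_subset assms(6)
      by auto
  qed
  then show ?thesis
    using M.pull_proj_carrier[OF assms(6)] assms(6) unfolding adj_map_def pull_proj_def by simp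
qed

lemma pull_map_pull_proj:
  assumes "lmodule R M" "is_dsum M Mg" "lmodule R M'" "is_dsum M' Mg'"
    "\<beta> \<in> sg_hom R M Mg M' Mg'" "x \<in> carrier M"
  shows "pull_map R I M Mg M' Mg' \<beta> (pull_proj R I M Mg x) = pull_proj R I M' Mg' (\<beta> x)"
proof -
  interpret M: ideal_graded_module I R M Mg by (rule ideal_graded_moduleI[OF assms(1,2)])
  interpret M': ideal_graded_module I R M' Mg' by (rule ideal_graded_moduleI[OF assms(3,4)])
  have "the_elem ((\<lambda>y. pull_sub R I M' Mg' +>\<^bsub>M'\<^esub> \<beta> y) ` (pull_sub R I M Mg +>\<^bsub>M\<^esub> x))
      = pull_sub R I M' Mg' +>\<^bsub>M'\<^esub> \<beta> x"
  proof (rule M.L.the_elem_image_rcos[OF assms(6)])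
    fix l assume "l \<in> pull_sub R I M Mg"
    then show "pull_sub R I M' Mg' +>\<^bsub>M'\<^esub> \<beta> (l \<oplus>\<^bsub>M\<^esub> x) = pull_sub R I M' Mg' +>\<^bsub>M'\<^esub> \<beta> x"
      using sg_homD(1,2)[OF assms(5)] sg_hom_image_pull_sub[OF assms(1-5)] M.L.a_subset assms(6)
        M'.L.a_rcos_absorb by auto
  qed
  then show ?thesis
    using M.pull_proj_carrier[OF assms(6)] sg_homD(1)[OF assms(5,6)] assms(6)
    unfolding pull_map_def pull_proj_def by simp
qed

lemma sg_hom_pullI:
  assumes "lmodule R M" "is_dsum M Mg" "\<phi> \<in> extensional (carrier (pull R I M Mg))"
    "compose (carrier M) \<phi> (pull_proj R I M Mg) \<in> sg_hom R M Mg (push R I N) Ng"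
  shows "\<phi> \<in> sg_hom (R Quot I) (pull R I M Mg) (pull_grading R I M Mg) N Ng"
proof -
  interpret M: ideal_graded_module I R M Mg by (rule ideal_graded_moduleI[OF assms(1,2)])
  let ?\<pi> = "pull_proj R I M Mg"
  have \<phi>: "\<phi> (?\<pi> x) = compose (carrier M) \<phi> ?\<pi> x" if "x \<in> carrier M" for x
    using that by (simp add: compose_def)
  note hom = sg_homD[OF assms(4)]
  show ?thesis
    unfolding sg_hom_def lmod_hom_def
  proof (intro CollectI conjI ballI allI funcsetI assms(3))
    fix X assume "X \<in> carrier (pull R I M Mg)"
    then obtain x where "x \<in> carrier M" "X = ?\<pi> x" by (rule M.pull_carrierE)
    then show "\<phi> X \<in> carrier N" using hom(1) \<phi> by simp
  next
    fix X Y assume "X \<in> carrier (pull R I M Mg)" "Y \<in> carrier (pull R I M Mg)"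
    then obtain x y where "x \<in> carrier M" "X = ?\<pi> x" "y \<in> carrier M" "Y = ?\<pi> y"
      by (metis M.pull_carrierE)
    then show "\<phi> (X \<oplus>\<^bsub>pull R I M Mg\<^esub> Y) = \<phi> X \<oplus>\<^bsub>N\<^esub> \<phi> Y"
      using hom(2) \<phi> M.M.a_closed by (simp add: M.pull_proj_add[symmetric])
  next
    fix A X assume "A \<in> carrier (R Quot I)" "X \<in> carrier (pull R I M Mg)"
    then obtain a x where "a \<in> carrier R" "A = I +> a" "x \<in> carrier M" "X = ?\<pi> x"
      by (metis quot_carrierE M.pull_carrierE)
    then show "\<phi> (A \<odot>\<^bsub>pull R I M Mg\<^esub> X) = A \<odot>\<^bsub>N\<^esub> \<phi> X"
      using hom(3) \<phi> lmodule_smult_closed[OF assms(1)] by (simp add: M.pull_smult)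
  next
    fix n
    show "\<phi> ` pull_grading R I M Mg n \<subseteq> Ng n"
    proof
      fix Y assume "Y \<in> \<phi> ` pull_grading R I M Mg n"
      then obtain x where x: "x \<in> Mg n" "Y = \<phi> (?\<pi> x)" unfolding M.pull_grading_eq by blast
      moreover have "x \<in> carrier M" using x(1) M.M.grading_subset by blast
      ultimately show "Y \<in> Ng n" using hom(4) \<phi> by simp
    qed
  qed
qed

lemma compose_adj_map_pull_proj:
  assumes "lmodule R M" "is_dsum M Mg" "lmodule (R Quot I) N" "is_dsum N Ng"
    "\<alpha> \<in> sg_hom R M Mg (push R I N) Ng"
  shows "compose (carrier M) (adj_map R I M Mg \<alpha>) (pull_proj R I M Mg) = \<alpha>"
  by (rule extensionalityI[OF compose_extensional sg_homD(5)[OF assms(5)]])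
    (simp add: compose_def adj_map_pull_proj[OF assms])

lemma adj_map_sg_hom:
  assumes "lmodule R M" "is_dsum M Mg" "lmodule (R Quot I) N" "is_dsum N Ng"
    "\<alpha> \<in> sg_hom R M Mg (push R I N) Ng"
  shows "adj_map R I M Mg \<alpha> \<in> sg_hom (R Quot I) (pull R I M Mg) (pull_grading R I M Mg) N Ng"
proof (rule sg_hom_pullI[OF assms(1,2)])
  show "adj_map R I M Mg \<alpha> \<in> extensional (carrier (pull R I M Mg))" by (simp add: adj_map_def)
qed (simp add: compose_adj_map_pull_proj[OF assms] assms(5))

lemma pull_map_sg_hom:
  assumes "lmodule R M" "is_dsum M Mg" "lmodule R M'" "is_dsum M' Mg'"
    "\<beta> \<in> sg_hom R M Mg M' Mg'"
  shows "pull_map R I M Mg M' Mg' \<beta>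
    \<in> sg_hom (R Quot I) (pull R I M Mg) (pull_grading R I M Mg) (pull R I M' Mg') (pull_grading R I M' Mg')"
proof (rule sg_hom_pullI[OF assms(1,2)])
  show "pull_map R I M Mg M' Mg' \<beta> \<in> extensional (carrier (pull R I M Mg))"
    by (simp add: pull_map_def)
  have "compose (carrier M) (pull_map R I M Mg M' Mg' \<beta>) (pull_proj R I M Mg)
      = compose (carrier M) (pull_proj R I M' Mg') \<beta>"
    by (rule extensionalityI[OF compose_extensional compose_extensional])
      (simp add: compose_def pull_map_pull_proj[OF assms])
  moreover have "compose (carrier M) (pull_proj R I M' Mg') \<beta>
      \<in> sg_hom R M Mg (push R I (pull R I M' Mg')) (pull_grading R I M' Mg')"
    using sg_hom_compose[OF assms(1,2,5) ideal_graded_module.pull_proj_sg_hom]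
      ideal_graded_moduleI[OF assms(3,4)] by blast
  ultimately show "compose (carrier M) (pull_map R I M Mg M' Mg' \<beta>) (pull_proj R I M Mg)
      \<in> sg_hom R M Mg (push R I (pull R I M' Mg')) (pull_grading R I M' Mg')" by simp
qed

lemma adj_map_bij:
  assumes "lmodule R M" "is_dsum M Mg" "lmodule (R Quot I) N" "is_dsum N Ng"
  shows "bij_betw (adj_map R I M Mg) (sg_hom R M Mg (push R I N) Ng)
    (sg_hom (R Quot I) (pull R I M Mg) (pull_grading R I M Mg) N Ng)"
proof (rule bij_betw_byWitness[where f' = "\<lambda>\<phi>. compose (carrier M) \<phi> (pull_proj R I M Mg)"])
  interpret M: ideal_graded_module I R M Mg by (rule ideal_graded_moduleI[OF assms(1,2)])
  have restrict: "compose (carrier M) \<phi> (pull_proj R I M Mg) \<in> sg_hom R M Mg (push R I N) Ng"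
    if "\<phi> \<in> sg_hom (R Quot I) (pull R I M Mg) (pull_grading R I M Mg) N Ng" for \<phi>
    by (rule sg_hom_compose[OF assms(1,2) M.pull_proj_sg_hom sg_hom_push[OF that]])
  then show "(\<lambda>\<phi>. compose (carrier M) \<phi> (pull_proj R I M Mg))
      ` sg_hom (R Quot I) (pull R I M Mg) (pull_grading R I M Mg) N Ng \<subseteq> sg_hom R M Mg (push R I N) Ng"
    by blast
  show "\<forall>\<alpha>\<in>sg_hom R M Mg (push R I N) Ng.
      compose (carrier M) (adj_map R I M Mg \<alpha>) (pull_proj R I M Mg) = \<alpha>"
    using compose_adj_map_pull_proj[OF assms] by blast
  show "adj_map R I M Mg ` sg_hom R M Mg (push R I N) Ng
      \<subseteq> sg_hom (R Quot I) (pull R I M Mg) (pull_grading R I M Mg) N Ng"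
    using adj_map_sg_hom[OF assms] by blast
  show "\<forall>\<phi>\<in>sg_hom (R Quot I) (pull R I M Mg) (pull_grading R I M Mg) N Ng.
      adj_map R I M Mg (compose (carrier M) \<phi> (pull_proj R I M Mg)) = \<phi>"
  proof
    fix \<phi> assume \<phi>: "\<phi> \<in> sg_hom (R Quot I) (pull R I M Mg) (pull_grading R I M Mg) N Ng"
    show "adj_map R I M Mg (compose (carrier M) \<phi> (pull_proj R I M Mg)) = \<phi>"
      by (rule M.pull_fun_eqI[OF _ sg_homD(5)[OF \<phi>]])
        (simp add: adj_map_def, simp add: adj_map_pull_proj[OF assms restrict[OF \<phi>]] compose_eq)
  qed
qed

lemma adj_map_natural_source:
  assumes "lmodule R M" "is_dsum M Mg" "lmodule R M'" "is_dsum M' Mg'"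
    "lmodule (R Quot I) N" "is_dsum N Ng"
    "\<beta> \<in> sg_hom R M' Mg' M Mg" "\<alpha> \<in> sg_hom R M Mg (push R I N) Ng"
  shows "adj_map R I M' Mg' (compose (carrier M') \<alpha> \<beta>)
    = compose (carrier (pull R I M' Mg')) (adj_map R I M Mg \<alpha>) (pull_map R I M' Mg' M Mg \<beta>)"
proof (rule ideal_graded_module.pull_fun_eqI[OF ideal_graded_moduleI[OF assms(3,4)]])
  have \<alpha>\<beta>: "compose (carrier M') \<alpha> \<beta> \<in> sg_hom R M' Mg' (push R I N) Ng"
    by (rule sg_hom_compose[OF assms(3,4,7,8)])
  fix x assume x: "x \<in> carrier M'"
  then show "adj_map R I M' Mg' (compose (carrier M') \<alpha> \<beta>) (pull_proj R I M' Mg' x)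
    = compose (carrier (pull R I M' Mg')) (adj_map R I M Mg \<alpha>) (pull_map R I M' Mg' M Mg \<beta>) (pull_proj R I M' Mg' x)"
    using ideal_graded_module.pull_proj_carrier[OF ideal_graded_moduleI[OF assms(3,4)] x]
      adj_map_pull_proj[OF assms(3-6) \<alpha>\<beta> x] pull_map_pull_proj[OF assms(3,4,1,2,7) x]
      adj_map_pull_proj[OF assms(1,2,5,6,8) sg_homD(1)[OF assms(7) x]]
    by (simp add: compose_def)
qed (simp_all add: adj_map_def)

lemma adj_map_natural_target:
  fixes N' :: "('a set, 'l) module"
  assumes "lmodule R M" "is_dsum M Mg" "lmodule (R Quot I) N" "is_dsum N Ng"
    "lmodule (R Quot I) N'" "is_dsum N' Ng'"
    "\<gamma> \<in> sg_hom (R Quot I) N Ng N' Ng'" "\<alpha> \<in> sg_hom R M Mg (push R I N) Ng"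
  shows "adj_map R I M Mg (compose (carrier M) \<gamma> \<alpha>)
    = compose (carrier (pull R I M Mg)) \<gamma> (adj_map R I M Mg \<alpha>)"
proof (rule ideal_graded_module.pull_fun_eqI[OF ideal_graded_moduleI[OF assms(1,2)]])
  have \<gamma>\<alpha>: "compose (carrier M) \<gamma> \<alpha> \<in> sg_hom R M Mg (push R I N') Ng'"
    by (rule sg_hom_compose[OF assms(1,2,8) sg_hom_push[OF assms(7)]])
  fix x assume x: "x \<in> carrier M"
  then show "adj_map R I M Mg (compose (carrier M) \<gamma> \<alpha>) (pull_proj R I M Mg x)
    = compose (carrier (pull R I M Mg)) \<gamma> (adj_map R I M Mg \<alpha>) (pull_proj R I M Mg x)"
    using ideal_graded_module.pull_proj_carrier[OF ideal_graded_moduleI[OF assms(1,2)] x]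
      adj_map_pull_proj[OF assms(1,2,5,6) \<gamma>\<alpha> x] adj_map_pull_proj[OF assms(1-4,8) x]
    by (simp add: compose_def)
qed (simp_all add: adj_map_def)

end

theorem mainTheorem7:
  fixes R :: "'a ring" and Rg :: "int \<Rightarrow> 'a set" and J :: "'a set"
  assumes "sg_ring R Rg" and "sg_ideal R Rg J"
  shows
    "(\<forall>(M :: ('a, 'm) module) Mg. sg_module R Rg M Mg \<longrightarrow>
        sg_module (R Quot J) (quot_grading R J Rg) (pull R J M Mg) (pull_grading R J M Mg))
  \<and> (\<forall>(M :: ('a, 'm) module) Mg (M' :: ('a, 'k) module) Mg' \<beta>.
        sg_module R Rg M Mg \<longrightarrow> sg_module R Rg M' Mg' \<longrightarrow> \<beta> \<in> sg_hom R M Mg M' Mg' \<longrightarrow>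
        pull_map R J M Mg M' Mg' \<beta> \<in>
          sg_hom (R Quot J) (pull R J M Mg) (pull_grading R J M Mg) (pull R J M' Mg') (pull_grading R J M' Mg'))
  \<and> (\<forall>(N :: ('a set, 'n) module) Ng. sg_module (R Quot J) (quot_grading R J Rg) N Ng \<longrightarrow>
        sg_module R Rg (push R J N) Ng)
  \<and> (\<forall>(N :: ('a set, 'n) module) Ng (N' :: ('a set, 'l) module) Ng' \<gamma>.
        sg_module (R Quot J) (quot_grading R J Rg) N Ng \<longrightarrow>
        sg_module (R Quot J) (quot_grading R J Rg) N' Ng' \<longrightarrow>
        \<gamma> \<in> sg_hom (R Quot J) N Ng N' Ng' \<longrightarrow> \<gamma> \<in> sg_hom R (push R J N) Ng (push R J N') Ng')
  \<and> (\<forall>(M :: ('a, 'm) module) Mg (N :: ('a set, 'n) module) Ng.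
        sg_module R Rg M Mg \<longrightarrow> sg_module (R Quot J) (quot_grading R J Rg) N Ng \<longrightarrow>
        bij_betw (adj_map R J M Mg) (sg_hom R M Mg (push R J N) Ng)
          (sg_hom (R Quot J) (pull R J M Mg) (pull_grading R J M Mg) N Ng))
  \<and> (\<forall>(M :: ('a, 'm) module) Mg (M' :: ('a, 'k) module) Mg' (N :: ('a set, 'n) module) Ng \<beta> \<alpha>.
        sg_module R Rg M Mg \<longrightarrow> sg_module R Rg M' Mg' \<longrightarrow>
        sg_module (R Quot J) (quot_grading R J Rg) N Ng \<longrightarrow>
        \<beta> \<in> sg_hom R M' Mg' M Mg \<longrightarrow> \<alpha> \<in> sg_hom R M Mg (push R J N) Ng \<longrightarrow>
        adj_map R J M' Mg' (compose (carrier M') \<alpha> \<beta>) =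
          compose (carrier (pull R J M' Mg')) (adj_map R J M Mg \<alpha>) (pull_map R J M' Mg' M Mg \<beta>))
  \<and> (\<forall>(M :: ('a, 'm) module) Mg (N :: ('a set, 'n) module) Ng (N' :: ('a set, 'l) module) Ng' \<gamma> \<alpha>.
        sg_module R Rg M Mg \<longrightarrow>
        sg_module (R Quot J) (quot_grading R J Rg) N Ng \<longrightarrow>
        sg_module (R Quot J) (quot_grading R J Rg) N' Ng' \<longrightarrow>
        \<gamma> \<in> sg_hom (R Quot J) N Ng N' Ng' \<longrightarrow> \<alpha> \<in> sg_hom R M Mg (push R J N) Ng \<longrightarrow>
        adj_map R J M Mg (compose (carrier M) \<gamma> \<alpha>) =
          compose (carrier (pull R J M Mg)) \<gamma> (adj_map R J M Mg \<alpha>))"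
proof -
  interpret ideal J R using assms(2) by (simp add: sg_ideal_def)
  show ?thesis
    using assms(1) sg_module_pull sg_module_push sg_hom_push
    by (blast dest: sg_moduleD intro: pull_map_sg_hom adj_map_bij adj_map_natural_source
        adj_map_natural_target)
qed

end
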